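(* Let $x_s<x_t$ be integers, let $C\ge 0$, and let $f:[x_s,x_t]\to\mathbb{R}$ be such that $([x_s,x_t],f)$ is an Ameso($C$) pair. Suppose there exist $x^0\in[x_s,x_t]$ and a positive integer $b$ with $[x^0-b,x^0]\subseteq[x_s,x_t]$ such that $f(x^0)=\min_{y\in[x^0-b,x^0]}f(y)$ and $f(x^0)+C\le\max_{y\in[x^0-b,x^0]}f(y)$. Then $f(x^0)=\min_{y\in[x_s,x^0]}f(y)$.
   Context: For integers $a\le b$, $[a,b]$ denotes the set of integers $\{a,a+1,\dots,b\}$. Floors and ceilings of vectors are taken componentwise. A set $D^n\subseteq\mathbb{Z}^n$ is an Ameso set if $\lceil(\vec x+\vec y)/2\rceil,\lfloor(\vec x+\vec y)/2\rfloor\in D^n$ for all $\vec x,\vec y\in D^n$. For $C\ge 0$, $(D^n,f)$ is an Ameso($C$) pair if $D^n$ is an Ameso set, $f:D^n\to\mathbb{R}$ is bounded below, and $f(\vec x)+f(\vec y)+C\ge f(\lceil(\vec x+\vec y)/2\rceil)+f(\lfloor(\vec x+\vec y)/2\rfloor)$ for all $\vec x,\vec y\in D^n$. *)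

theory Defs
  imports Complex_Main
begin

text \<open>One-dimensional instance (n = 1) of Ameso sets and Ameso(C) pairs.
  Floors and ceilings of the midpoint (x+y)/2 are taken in the reals.\<close>

definition ameso_set :: "int set \<Rightarrow> bool" where
  "ameso_set D \<longleftrightarrow> (\<forall>x\<in>D. \<forall>y\<in>D.
     \<lceil>(real_of_int x + real_of_int y) / 2\<rceil> \<in> D \<and>
     \<lfloor>(real_of_int x + real_of_int y) / 2\<rfloor> \<in> D)"

definition ameso_pair :: "int set \<Rightarrow> (int \<Rightarrow> real) \<Rightarrow> real \<Rightarrow> bool" where
  "ameso_pair D f C \<longleftrightarrow> ameso_set D \<and> bdd_below (f ` D) \<and>
     (\<forall>x\<in>D. \<forall>y\<in>D. f x + f y + C \<ge>
        f \<lceil>(real_of_int x + real_of_int y) / 2\<rceil> +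
        f \<lfloor>(real_of_int x + real_of_int y) / 2\<rfloor>)"

end

theory Submission imports Defs begin

(* Suppose some z < x0 had f z < f x0. Minimality of f x0 on the window puts z to the left of
   the window, and the window contains a point y < x0 with f y >= f x0 + C (if the maximum is
   attained only at x0, then C = 0 and y = x0 - 1 will do). Let h be the leftmost maximiser of
   f on the open interval between z and x0, so f h >= f x0 + C. The midpoint inequality for the
   pair z, 2h - z (if 2h - z <= x0) yields a larger value to the right of h, and the one for
   2h - x0, x0 (otherwise) yields an at least as large value to the left of h. *)

lemma ameso_pair_even_midpoint:
  fixes p q k :: int
  assumes "ameso_pair D f C" "p \<in> D" "q \<in> D" "p + q = 2 * k"
  shows "2 * f k \<le> f p + f q + C"
proof -
  have "(real_of_int p + real_of_int q) / 2 = real_of_int k"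
    using arg_cong[OF assms(4), of real_of_int] by simp
  then show ?thesis
    using assms(1-3) unfolding ameso_pair_def by force
qed

lemma obtain_leftmost_maximizer:
  fixes S :: "'a::linorder set" and f :: "'a \<Rightarrow> 'b::linorder"
  assumes "finite S" "S \<noteq> {}"
  obtains h where "h \<in> S" "\<And>p. p \<in> S \<Longrightarrow> f p \<le> f h"
    "\<And>p. p \<in> S \<Longrightarrow> f p = f h \<Longrightarrow> h \<le> p"
proof -
  define T where "T = {p \<in> S. f p = Max (f ` S)}"
  have "Max (f ` S) \<in> f ` S"
    using assms by simp
  then have "finite T" "T \<noteq> {}"
    using assms(1) unfolding T_def by auto
  then have "Min T \<in> T" "\<And>p. p \<in> T \<Longrightarrow> Min T \<le> p"
    by simp_all
  with assms(1) show thesis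
    by (intro that[of "Min T"]) (auto simp: T_def)
qed

lemma approx_midpoint_convex_interior_bound:
  fixes z x y :: int and f :: "int \<Rightarrow> real"
  assumes mid: "\<And>p q k. p \<in> {z..x} \<Longrightarrow> q \<in> {z..x} \<Longrightarrow> p + q = 2 * k \<Longrightarrow>
      2 * f k \<le> f p + f q + C"
    and "C \<ge> 0" and "f z < f x" and "y \<in> {z<..<x}"
  shows "f y < f x + C"
proof (rule ccontr)
  assume "\<not> f y < f x + C"
  obtain h where h: "h \<in> {z<..<x}" and h_max: "\<And>p. p \<in> {z<..<x} \<Longrightarrow> f p \<le> f h"
    and h_leftmost: "\<And>p. p \<in> {z<..<x} \<Longrightarrow> f p = f h \<Longrightarrow> h \<le> p"
    using obtain_leftmost_maximizer[of "{z<..<x}" f] assms(4) by blast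
  have high: "f h \<ge> f x + C"
    using h_max[OF assms(4)] \<open>\<not> f y < f x + C\<close> by linarith
  show False
  proof (cases "2 * h - z \<le> x")
    case True
    have "2 * f h \<le> f z + f (2 * h - z) + C"
      using mid[of z "2 * h - z" h] h True by simp
    then have "f (2 * h - z) > f h"
      using assms(3) high by linarith
    moreover have "2 * h - z \<noteq> x"
      using calculation high assms(2) by auto
    ultimately show False
      using h_max[of "2 * h - z"] h True by force
  next
    case False
    have "2 * f h \<le> f (2 * h - x) + f x + C"
      using mid[of "2 * h - x" x h] h False by simp
    then have "f (2 * h - x) \<ge> f h"
      using high by linarith
    then show False
      using h_max[of "2 * h - x"] h_leftmost[of "2 * h - x"] h False by force
  qed
qed

theorem lemma5:
  fixes xs xt x0 b :: int and C :: real and f :: "int \<Rightarrow> real"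
  assumes "xs < xt"
    and "C \<ge> 0"
    and "ameso_pair {xs..xt} f C"
    and "x0 \<in> {xs..xt}"
    and "b > 0"
    and "{x0 - b..x0} \<subseteq> {xs..xt}"
    and "f x0 = Min (f ` {x0 - b..x0})"
    and "f x0 + C \<le> Max (f ` {x0 - b..x0})"
  shows "f x0 = Min (f ` {xs..x0})"
proof (rule ccontr)
  assume "f x0 \<noteq> Min (f ` {xs..x0})"
  moreover have "Min (f ` {xs..x0}) \<in> f ` {xs..x0}" "Min (f ` {xs..x0}) \<le> f x0"
    using assms(4) by auto
  ultimately obtain z where z: "z \<in> {xs..x0}" "f z < f x0"
    by force
  have window_min: "\<And>p. p \<in> {x0 - b..x0} \<Longrightarrow> f x0 \<le> f p"
    using assms(7) by simp
  have "z < x0 - b"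
  proof (rule ccontr)
    assume "\<not> z < x0 - b"
    then show False
      using window_min[of z] z by simp
  qed
  have "Max (f ` {x0 - b..x0}) \<in> f ` {x0 - b..x0}"
    using assms(5) by (intro Max_in) auto
  then obtain y where y: "y \<in> {x0 - b..x0}" "f y \<ge> f x0 + C"
    using assms(8) by force
  have "\<exists>y'\<in>{z<..<x0}. f y' \<ge> f x0 + C"
  proof (cases "y = x0")
    case True
    then show ?thesis
      using y window_min[of "x0 - 1"] assms(2,5) \<open>z < x0 - b\<close> by (intro bexI[of _ "x0 - 1"]) auto
  qed (use y \<open>z < x0 - b\<close> in auto)
  moreover have "\<And>p q k. p \<in> {z..x0} \<Longrightarrow> q \<in> {z..x0} \<Longrightarrow> p + q = 2 * k \<Longrightarrow>
      2 * f k \<le> f p + f q + C"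
    using ameso_pair_even_midpoint[OF assms(3)] z assms(4) by auto
  ultimately show False
    using approx_midpoint_convex_interior_bound[of z x0 f C] assms(2) z by force
qed

end
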